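(* Let $G$ be a countable group, $\mu$ a probability measure on $G$, and $(X,\xi)$ a $(G,\mu)$-stationary space. Then the map \[ [2,\infty)\to[0,\infty),\qquad p\mapsto-p\log\langle\pi_{q,X}(\mu)1,1\rangle, \] where $q$ is the conjugate exponent of $p$, is increasing and bounded by $h_\mu(X,\xi)$. If in addition $\mu$ is non-degenerate, then \[ \lim_{p\to\infty}-p\log\langle\pi_{q,X}(\mu)1,1\rangle=h_\mu(X,\xi). \]
   Context: A $(G,\mu)$-stationary space is a standard probability space $(X,\xi)$ with a measurable non-singular $G$-action such that $\sum_s\mu(s)\xi(s^{-1}A)=\xi(A)$ for measurable $A$. Write $(s\xi)(A)=\xi(s^{-1}A)$ and $\rho(s,x)=\frac{d(s^{-1}\xi)}{d\xi}(x)$. For $1\le r<\infty$, the $L^r$-Koopman representation is $[\pi_{r,X}(s)f](x)=\big[\frac{d(s\xi)}{d\xi}(x)\big]^{1/r}f(s^{-1}x)$ on $L^r(X,\xi)$, and $\pi_{r,X}(\mu)=\sum_s\mu(s)\pi_{r,X}(s)$. The pairing is $\langle f,g\rangle=\int f\bar g\,d\xi$; one has $\langle\pi_{q,X}(\mu)1,1\rangle=\sum_s\mu(s)\int_X\rho(s,x)^{1/p}d\xi(x)$. The Furstenberg entropy is $h_\mu(X,\xi)=-\sum_s\mu(s)\int_X\log\rho(s,x)d\xi(x)$. $\mu$ is non-degenerate if its support generates $G$ as a semigroup. *)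

theory Defs
  imports "HOL-Probability.Probability"
begin

text \<open>Groups are written additively via the type class group_add (not assumed
commutative): the identity is 0, the product s t is s + t, the inverse of s is - s.\<close>

definition group_action :: "'x measure \<Rightarrow> ('g::group_add \<Rightarrow> 'x \<Rightarrow> 'x) \<Rightarrow> bool" where
  "group_action M act \<longleftrightarrow>
     (\<forall>x\<in>space M. act 0 x = x) \<and>
     (\<forall>s t. \<forall>x\<in>space M. act (s + t) x = act s (act t x)) \<and>
     (\<forall>s. act s \<in> measurable M M)"

definition push :: "'x measure \<Rightarrow> ('g \<Rightarrow> 'x \<Rightarrow> 'x) \<Rightarrow> 'g \<Rightarrow> 'x measure" where
  "push M act s = distr M M (act s)"

definition nonsingular_action :: "'x measure \<Rightarrow> ('g::group_add \<Rightarrow> 'x \<Rightarrow> 'x) \<Rightarrow> bool" where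
  "nonsingular_action M act \<longleftrightarrow>
     group_action M act \<and>
     (\<forall>s. absolutely_continuous M (push M act s) \<and> absolutely_continuous (push M act s) M)"

definition standard_prob_space :: "'x::polish_space measure \<Rightarrow> bool" where
  "standard_prob_space M \<longleftrightarrow> prob_space M \<and> sets M = sets (borel :: 'x measure)"

definition stationary_space ::
    "'g::{group_add,countable} pmf \<Rightarrow> 'x::polish_space measure \<Rightarrow> ('g \<Rightarrow> 'x \<Rightarrow> 'x) \<Rightarrow> bool" where
  "stationary_space \<mu> M act \<longleftrightarrow>
     standard_prob_space M \<and> nonsingular_action M act \<and>
     (\<forall>A\<in>sets M. (\<integral>s. measure M (act s -` A \<inter> space M) \<partial>measure_pmf \<mu>) = measure M A)"

definition rho :: "'x measure \<Rightarrow> ('g::group_add \<Rightarrow> 'x \<Rightarrow> 'x) \<Rightarrow> 'g \<Rightarrow> 'x \<Rightarrow> real" where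
  "rho M act s x = enn2real (RN_deriv M (push M act (- s)) x)"

definition koopman :: "'x measure \<Rightarrow> ('g::group_add \<Rightarrow> 'x \<Rightarrow> 'x) \<Rightarrow> real \<Rightarrow> 'g \<Rightarrow> ('x \<Rightarrow> real) \<Rightarrow> 'x \<Rightarrow> real" where
  "koopman M act r s f x = (enn2real (RN_deriv M (push M act s) x)) powr (1 / r) * f (act (- s) x)"

definition koopman_mu :: "'g::group_add pmf \<Rightarrow> 'x measure \<Rightarrow> ('g \<Rightarrow> 'x \<Rightarrow> 'x) \<Rightarrow> real \<Rightarrow> ('x \<Rightarrow> real) \<Rightarrow> 'x \<Rightarrow> real" where
  "koopman_mu \<mu> M act r f x = (\<integral>s. koopman M act r s f x \<partial>measure_pmf \<mu>)"

text \<open>The pairing <f,g> = integral of f * conj g (real-valued functions here).\<close>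
definition pairing :: "'x measure \<Rightarrow> ('x \<Rightarrow> real) \<Rightarrow> ('x \<Rightarrow> real) \<Rightarrow> real" where
  "pairing M f g = (\<integral>x. f x * g x \<partial>M)"

text \<open>Furstenberg entropy h = - sum_s mu(s) int log rho(s,x) d xi(x), as an extended real
  (Lebesgue integral of positive part minus negative part of -log rho over mu x xi).\<close>
definition furstenberg_entropy :: "'g::group_add pmf \<Rightarrow> 'x measure \<Rightarrow> ('g \<Rightarrow> 'x \<Rightarrow> 'x) \<Rightarrow> ereal" where
  "furstenberg_entropy \<mu> M act =
     enn2ereal (\<integral>\<^sup>+s. (\<integral>\<^sup>+x. ennreal (- ln (rho M act s x)) \<partial>M) \<partial>measure_pmf \<mu>)
   - enn2ereal (\<integral>\<^sup>+s. (\<integral>\<^sup>+x. ennreal (ln (rho M act s x)) \<partial>M) \<partial>measure_pmf \<mu>)"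

inductive_set semigroup_generated :: "'g::plus set \<Rightarrow> 'g set" for S where
  base: "s \<in> S \<Longrightarrow> s \<in> semigroup_generated S"
| plus: "a \<in> semigroup_generated S \<Longrightarrow> b \<in> semigroup_generated S \<Longrightarrow> a + b \<in> semigroup_generated S"

definition nondegenerate :: "'g::group_add pmf \<Rightarrow> bool" where
  "nondegenerate \<mu> \<longleftrightarrow> semigroup_generated (set_pmf \<mu>) = UNIV"

end

theory Submission
  imports Defs "HOL-Real_Asymp.Real_Asymp"
begin

text \<open>Put \<open>Y(s, x) = \<rho>(s, x)\<close> on \<open>\<mu> \<times> \<xi>\<close>: a positive function of mean one. Changing variables
  along the action, \<open>\<langle>\<pi>\<^sub>q(\<mu>) 1, 1\<rangle> = E[Y\<^bsup>1/p\<^esup>]\<close> and \<open>h\<^sub>\<mu> = E[Y - 1 - ln Y]\<close>, so everything is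
  about one random variable. Lyapunov's inequality makes \<open>-p ln E[Y\<^bsup>1/p\<^esup>]\<close> non-decreasing,
  Jensen's inequality for \<open>exp\<close> bounds it by \<open>E[-ln Y]\<close>, and since
  \<open>p (1 - Y\<^bsup>1/p\<^esup>) - (1 - Y)\<close> increases to \<open>Y - 1 - ln Y\<close>, monotone convergence together
  with \<open>ln x \<le> x - 1\<close> gives the limit.\<close>

lemma powr_le_1_plus_self:
  fixes y t :: real
  assumes "0 \<le> y" "0 < t" "t \<le> 1"
  shows "y powr t \<le> 1 + y"
proof (cases "y \<le> 1")
  case True
  then have "y powr t \<le> 1 powr t" using assms by (intro powr_mono2) auto
  then show ?thesis using assms by simp
next
  case False
  then have "y powr t \<le> y powr 1" using assms by (intro powr_mono) auto
  then show ?thesis using False by simp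
qed

lemma exp_mult_diff_quotient_mono:
  fixes L s t :: real
  assumes "0 < s" "s \<le> t"
  shows "(exp (s * L) - 1) / s \<le> (exp (t * L) - 1) / t"
proof -
  define u where "u = s / t"
  have u: "0 < u" "u \<le> 1" "u * (t * L) = s * L" using assms by (auto simp: u_def)
  have "exp ((1 - u) * 0 + u * (t * L)) \<le> (1 - u) * exp 0 + u * exp (t * L)"
    using convex_onD[OF exp_convex, of u 0 "t * L"] u(1,2) by auto
  then have "exp (s * L) \<le> (1 - u) + u * exp (t * L)" using u(3) by simp
  then have "exp (s * L) - 1 \<le> u * (exp (t * L) - 1)" by (simp add: algebra_simps)
  then show ?thesis using assms by (simp add: u_def field_simps)
qed

lemma mult_1_minus_powr_inverse_mono:
  fixes y a b :: real
  assumes "0 < y" "0 < a" "a \<le> b"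
  shows "a * (1 - y powr (1 / a)) \<le> b * (1 - y powr (1 / b))"
proof -
  have "(exp (1 / b * ln y) - 1) / (1 / b) \<le> (exp (1 / a * ln y) - 1) / (1 / a)"
    using assms by (intro exp_mult_diff_quotient_mono) (auto simp: field_simps)
  then show ?thesis using assms by (simp add: powr_def algebra_simps)
qed

lemma powr_1_minus_eq_mult_inverse_powr:
  fixes r t :: real
  assumes "0 \<le> r"
  shows "r powr (1 - t) = r * (1 / r) powr t"
  using assms by (cases "r = 0") (simp_all add: powr_diff powr_divide field_simps)

lemma ennreal_minus_ln_add_self:
  fixes y :: real
  assumes "0 < y"
  shows "ennreal (- ln y) + ennreal y = ennreal (y - 1 - ln y) + 1 + ennreal (ln y)"
proof -
  have l: "ln y \<le> y - 1" using ln_le_minus_one assms by auto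
  show ?thesis
  proof (cases "0 \<le> ln y")
    case True
    have "ennreal y = ennreal ((y - 1 - ln y) + 1 + ln y)" by simp
    also have "\<dots> = ennreal (y - 1 - ln y) + 1 + ennreal (ln y)"
      using l True by (simp only: ennreal_plus add_nonneg_nonneg diff_ge_0_iff_ge ennreal_1)
    finally show ?thesis using True by (simp add: ennreal_neg)
  next
    case False
    have "ennreal (- ln y) + ennreal y = ennreal ((y - 1 - ln y) + 1)"
      using False assms by (simp add: ennreal_plus[symmetric] del: ennreal_plus)
    also have "\<dots> = ennreal (y - 1 - ln y) + 1"
      using l by (simp only: ennreal_plus diff_ge_0_iff_ge zero_le_one ennreal_1)
    finally show ?thesis using False by (simp add: ennreal_neg)
  qed
qed

lemma tendsto_mult_1_minus_powr_inverse:
  fixes y :: real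
  assumes "0 < y"
  shows "(\<lambda>n. real (Suc n) * (1 - y powr (1 / real (Suc n)))) \<longlonglongrightarrow> - ln y"
proof -
  have "((\<lambda>p::real. p * (1 - exp (ln y / p))) \<longlongrightarrow> - ln y) at_top"
    by real_asymp
  then have "(\<lambda>n. real n * (1 - exp (ln y / real n))) \<longlonglongrightarrow> - ln y"
    by (rule filterlim_compose[OF _ filterlim_real_sequentially])
  from LIMSEQ_Suc[OF this] show ?thesis
    using assms by (simp add: powr_def)
qed

lemma mono_on_tendsto_at_top:
  fixes f :: "real \<Rightarrow> 'a::linorder_topology"
  assumes mono: "mono_on {c..} f"
    and bound: "\<And>p. c \<le> p \<Longrightarrow> f p \<le> L"
    and approx: "\<And>a. a < L \<Longrightarrow> \<exists>p\<ge>c. a < f p"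
  shows "(f \<longlongrightarrow> L) at_top"
proof (rule order_tendstoI)
  fix a assume "L < a"
  show "\<forall>\<^sub>F p in at_top. f p < a"
    using eventually_ge_at_top[of c]
    by eventually_elim (use bound \<open>L < a\<close> in \<open>auto intro: le_less_trans\<close>)
next
  fix a assume "a < L"
  then obtain p\<^sub>0 where p\<^sub>0: "c \<le> p\<^sub>0" "a < f p\<^sub>0" using approx by blast
  show "\<forall>\<^sub>F p in at_top. a < f p"
    using eventually_ge_at_top[of p\<^sub>0]
  proof eventually_elim
    case (elim p)
    then have "f p\<^sub>0 \<le> f p" using p\<^sub>0(1) by (intro mono_onD[OF mono]) auto
    then show ?case using p\<^sub>0(2) by order
  qed
qed

section \<open>Moments of a positive density of mean one\<close>

context prob_space
begin

lemma integrable_powr: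
  fixes Z :: "'a \<Rightarrow> real"
  assumes Z: "integrable M Z" "AE x in M. 0 \<le> Z x" and a: "0 < a" "a \<le> 1"
  shows "integrable M (\<lambda>x. Z x powr a)"
proof (rule Bochner_Integration.integrable_bound)
  show "integrable M (\<lambda>x. 1 + Z x)" using Z by auto
  show "(\<lambda>x. Z x powr a) \<in> borel_measurable M" using Z(1) by measurable
  show "AE x in M. norm (Z x powr a) \<le> norm (1 + Z x)"
    using Z(2) by eventually_elim (use powr_le_1_plus_self[OF _ a] in auto)
qed

lemma expectation_powr_le:
  fixes Z :: "'a \<Rightarrow> real"
  assumes Z: "integrable M Z" "AE x in M. 0 < Z x" and a: "0 < a" "a \<le> 1"
  shows "expectation (\<lambda>x. Z x powr a) \<le> expectation Z powr a"
proof -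
  let ?W = "\<lambda>x. Z x powr a"
  have Z_nonneg: "AE x in M. 0 \<le> Z x" using Z(2) by eventually_elim auto
  have W: "integrable M ?W" by (rule integrable_powr[OF Z(1) Z_nonneg a])
  have Z_eq: "AE x in M. ?W x powr (1 / a) = Z x"
    using Z(2) by eventually_elim (use a in \<open>auto simp: powr_powr\<close>)
  have "expectation ?W powr (1 / a) \<le> expectation (\<lambda>x. ?W x powr (1 / a))"
  proof (rule jensens_inequality[OF W, where I="{0<..}"])
    show "integrable M (\<lambda>x. ?W x powr (1 / a))"
      using integrable_cong_AE[OF _ _ Z_eq] Z(1) by (simp add: borel_measurable_integrable)
  qed (use Z(2) a in \<open>auto intro: powr_convex\<close>)
  also have "\<dots> = expectation Z"
    using integral_cong_AE[OF _ _ Z_eq] Z(1) by (simp add: borel_measurable_integrable)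
  finally have "expectation ?W powr (1 / a) \<le> expectation Z" .
  moreover have "0 \<le> expectation ?W" by (rule integral_nonneg_AE) (use Z_nonneg in auto)
  ultimately show ?thesis
    using powr_mono2[of a "expectation ?W powr (1 / a)" "expectation Z"] a by (simp add: powr_powr)
qed

end

locale unit_mean_density = prob_space +
  fixes Y :: "'a \<Rightarrow> real"
  assumes integrable_Y: "integrable M Y"
    and AE_Y_pos: "AE x in M. 0 < Y x"
    and expectation_Y: "expectation Y = 1"
begin

definition power_moment :: "real \<Rightarrow> real" where
  "power_moment t = expectation (\<lambda>x. Y x powr t)"

definition scaled_log_moment :: "real \<Rightarrow> real" where
  "scaled_log_moment p = - p * ln (power_moment (1 / p))"

text \<open>This is \<open>E[-ln Y]\<close>, written with the nonnegative integrand \<open>Y - 1 - ln Y\<close> (recall \<open>E[Y] = 1\<close>)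
  so that it makes sense even when \<open>ln Y\<close> is not integrable.\<close>
definition divergence :: ennreal where
  "divergence = (\<integral>\<^sup>+x. ennreal (Y x - 1 - ln (Y x)) \<partial>M)"

definition divergence_approx :: "real \<Rightarrow> 'a \<Rightarrow> real" where
  "divergence_approx p x = p * (1 - Y x powr (1 / p)) - (1 - Y x)"

lemma measurable_Y[measurable]: "Y \<in> borel_measurable M"
  using integrable_Y by auto

lemma AE_Y_nonneg: "AE x in M. 0 \<le> Y x"
  using AE_Y_pos by eventually_elim simp

lemma nn_integral_Y: "(\<integral>\<^sup>+x. ennreal (Y x) \<partial>M) = 1"
  using nn_integral_eq_integral[OF integrable_Y AE_Y_nonneg] expectation_Y by simp

lemma integrable_Y_powr: "0 < t \<Longrightarrow> t \<le> 1 \<Longrightarrow> integrable M (\<lambda>x. Y x powr t)"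
  by (rule integrable_powr[OF integrable_Y AE_Y_nonneg])

lemma power_moment_pos:
  assumes "0 < t" "t \<le> 1"
  shows "0 < power_moment t"
proof -
  have "0 \<le> power_moment t" unfolding power_moment_def by (rule integral_nonneg_AE) auto
  moreover have "power_moment t \<noteq> 0"
  proof
    assume "power_moment t = 0"
    then have "AE x in M. Y x powr t = 0"
      using integral_nonneg_eq_0_iff_AE[OF integrable_Y_powr[OF assms]]
      unfolding power_moment_def by auto
    with AE_Y_pos have "AE x in M. False" by eventually_elim auto
    then show False by simp
  qed
  ultimately show ?thesis by simp
qed

lemma power_moment_le_powr:
  assumes "0 < s" "s \<le> t" "t \<le> 1"
  shows "power_moment s \<le> power_moment t powr (s / t)"
proof -
  have "expectation (\<lambda>x. (Y x powr t) powr (s / t)) \<le> power_moment t powr (s / t)"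
    unfolding power_moment_def
    by (rule expectation_powr_le[OF integrable_Y_powr])
       (use assms AE_Y_pos in \<open>auto elim!: eventually_mono\<close>)
  moreover have "(Y x powr t) powr (s / t) = Y x powr s" for x
    using assms by (simp add: powr_powr)
  ultimately show ?thesis by (simp add: power_moment_def)
qed

lemma power_moment_1: "power_moment 1 = 1"
proof -
  have "power_moment 1 = expectation Y" unfolding power_moment_def
    by (rule integral_cong_AE) (use AE_Y_nonneg in \<open>auto elim!: eventually_mono\<close>)
  then show ?thesis using expectation_Y by simp
qed

lemma power_moment_le_1: "0 < t \<Longrightarrow> t \<le> 1 \<Longrightarrow> power_moment t \<le> 1"
  using power_moment_le_powr[of t 1] by (simp add: power_moment_1)

lemma scaled_log_moment_nonneg:
  assumes "1 \<le> p"
  shows "0 \<le> scaled_log_moment p"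
proof -
  have "0 < power_moment (1 / p)" "power_moment (1 / p) \<le> 1"
    using assms by (auto intro!: power_moment_pos power_moment_le_1)
  then have "ln (power_moment (1 / p)) \<le> 0" by simp
  then show ?thesis using assms by (simp add: scaled_log_moment_def mult_nonneg_nonpos)
qed

lemma scaled_log_moment_mono: "mono_on {1..} scaled_log_moment"
proof (rule mono_onI)
  fix p p' :: real
  assume "p \<in> {1..}" "p' \<in> {1..}" "p \<le> p'"
  then have p: "1 \<le> p" "p \<le> p'" by auto
  have pos: "0 < power_moment (1 / p')" "0 < power_moment (1 / p)"
    using p by (auto intro!: power_moment_pos)
  have "power_moment (1 / p') \<le> power_moment (1 / p) powr (p / p')"
    using power_moment_le_powr[of "1 / p'" "1 / p"] p by (simp add: field_simps)
  then have "ln (power_moment (1 / p')) \<le> ln (power_moment (1 / p) powr (p / p'))"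
    using pos by (subst ln_le_cancel_iff) auto
  also have "\<dots> = (p / p') * ln (power_moment (1 / p))"
    using pos by simp
  finally have "p' * ln (power_moment (1 / p')) \<le> p * ln (power_moment (1 / p))"
    using p by (simp add: field_simps)
  then show "scaled_log_moment p \<le> scaled_log_moment p'"
    by (simp add: scaled_log_moment_def)
qed

lemma ln_parts_nn_integral_eq_divergence:
  "enn2ereal (\<integral>\<^sup>+x. ennreal (- ln (Y x)) \<partial>M) - enn2ereal (\<integral>\<^sup>+x. ennreal (ln (Y x)) \<partial>M)
     = enn2ereal divergence"
proof -
  define A where "A = (\<integral>\<^sup>+x. ennreal (- ln (Y x)) \<partial>M)"
  define B where "B = (\<integral>\<^sup>+x. ennreal (ln (Y x)) \<partial>M)"
  have "(\<integral>\<^sup>+x. ennreal (- ln (Y x)) + ennreal (Y x) \<partial>M)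
      = (\<integral>\<^sup>+x. ennreal (Y x - 1 - ln (Y x)) + 1 + ennreal (ln (Y x)) \<partial>M)"
    by (rule nn_integral_cong_AE)
       (use AE_Y_pos in \<open>auto elim!: eventually_mono intro: ennreal_minus_ln_add_self\<close>)
  then have "A + 1 = divergence + 1 + B"
    by (simp add: nn_integral_add A_def B_def divergence_def nn_integral_Y emeasure_space_1)
  then have A: "A = divergence + B"
    by (simp add: ac_simps)
  have "B \<le> (\<integral>\<^sup>+x. ennreal (Y x) \<partial>M)" unfolding B_def
    by (rule nn_integral_mono_AE)
       (use AE_Y_pos in \<open>auto elim!: eventually_mono intro!: ennreal_leI simp: ln_less_self less_imp_le\<close>)
  then have "B \<noteq> \<top>" by (auto simp: nn_integral_Y top_unique)
  then show ?thesis
    unfolding A_def[symmetric] B_def[symmetric] A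
    by (cases B)
       (simp_all add: plus_ennreal.rep_eq add.commute[of "enn2ereal divergence"] ereal_diff_add_inverse)
qed

lemma divergence_ennrealD:
  assumes "0 \<le> c" "divergence = ennreal c"
  shows "integrable M (\<lambda>x. ln (Y x))" "expectation (\<lambda>x. ln (Y x)) = - c"
proof -
  define g where "g x = Y x - 1 - ln (Y x)" for x
  have g_nonneg: "AE x in M. 0 \<le> g x"
    using AE_Y_pos by eventually_elim (use ln_le_minus_one in \<open>fastforce simp: g_def\<close>)
  have nn_g: "(\<integral>\<^sup>+x. ennreal (g x) \<partial>M) = ennreal c"
    using assms(2) by (simp add: divergence_def g_def)
  have g: "integrable M g"
    by (rule integrableI_nn_integral_finite[OF _ g_nonneg nn_g]) (simp add: g_def)
  have "ennreal (expectation g) = ennreal c"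
    using nn_integral_eq_integral[OF g g_nonneg] nn_g by simp
  then have "expectation g = c"
    using assms(1) integral_nonneg_AE[OF g_nonneg] by simp
  moreover have ln_Y: "ln (Y x) = Y x - 1 - g x" for x by (simp add: g_def)
  ultimately show "integrable M (\<lambda>x. ln (Y x))" "expectation (\<lambda>x. ln (Y x)) = - c"
    using g integrable_Y expectation_Y by (simp_all add: ln_Y prob_space)
qed

lemma mult_expectation_ln_le_ln_power_moment:
  assumes ln_Y: "integrable M (\<lambda>x. ln (Y x))" and t: "0 < t" "t \<le> 1"
  shows "t * expectation (\<lambda>x. ln (Y x)) \<le> ln (power_moment t)"
proof -
  have exp_eq: "AE x in M. Y x powr t = exp (t * ln (Y x))"
    using AE_Y_pos by eventually_elim (simp add: powr_def)
  have "exp (expectation (\<lambda>x. t * ln (Y x))) \<le> expectation (\<lambda>x. exp (t * ln (Y x)))"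
  proof (rule jensens_inequality[where I=UNIV])
    show "integrable M (\<lambda>x. exp (t * ln (Y x)))"
      using integrable_cong_AE[OF _ _ exp_eq] integrable_Y_powr[OF t] by simp
  qed (use ln_Y exp_convex in auto)
  also have "\<dots> = power_moment t"
    unfolding power_moment_def using integral_cong_AE[OF _ _ exp_eq] by simp
  finally show ?thesis
    using power_moment_pos[OF t] by (simp add: ln_ge_iff)
qed

lemma scaled_log_moment_le_divergence:
  assumes "1 \<le> p"
  shows "ereal (scaled_log_moment p) \<le> enn2ereal divergence"
proof (cases divergence)
  case (real c)
  have "- c / p \<le> ln (power_moment (1 / p))"
    using mult_expectation_ln_le_ln_power_moment[of "1 / p"] divergence_ennrealD[OF real] assms
    by simp
  then have "scaled_log_moment p \<le> c"
    using assms by (simp add: scaled_log_moment_def field_simps)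
  then show ?thesis using real by simp
qed simp

lemma nn_integral_divergence_approx_le:
  assumes "1 \<le> p"
  shows "(\<integral>\<^sup>+x. ennreal (divergence_approx p x) \<partial>M) \<le> ennreal (scaled_log_moment p)"
proof -
  have nonneg: "AE x in M. 0 \<le> divergence_approx p x"
    using AE_Y_pos by eventually_elim
      (use mult_1_minus_powr_inverse_mono[of _ 1 p] assms in \<open>auto simp: divergence_approx_def\<close>)
  have "integrable M (divergence_approx p)"
    using integrable_Y_powr[of "1 / p"] integrable_Y assms by (simp add: divergence_approx_def[abs_def])
  then have "(\<integral>\<^sup>+x. ennreal (divergence_approx p x) \<partial>M) = ennreal (p * (1 - power_moment (1 / p)))"
    using nn_integral_eq_integral[OF _ nonneg] integrable_Y_powr[of "1 / p"] integrable_Y expectation_Y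
      assms by (simp add: divergence_approx_def power_moment_def prob_space)
  also have "\<dots> \<le> ennreal (scaled_log_moment p)"
  proof (rule ennreal_leI)
    have "ln (power_moment (1 / p)) \<le> power_moment (1 / p) - 1"
      using assms by (intro ln_le_minus_one power_moment_pos) auto
    then show "p * (1 - power_moment (1 / p)) \<le> scaled_log_moment p"
      using assms mult_left_mono[of "1 - power_moment (1 / p)" "- ln (power_moment (1 / p))" p]
      by (simp add: scaled_log_moment_def)
  qed
  finally show ?thesis .
qed

lemma divergence_eq_SUP: "divergence = (SUP n. \<integral>\<^sup>+x. ennreal (divergence_approx (Suc n) x) \<partial>M)"
proof -
  define g where "g n y = real (Suc n) * (1 - y powr (1 / real (Suc n))) - (1 - y)" for n y
  have g_mono: "g n y \<le> g (Suc n) y" if "0 < y" for n y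
    using mult_1_minus_powr_inverse_mono[OF that, of "real (Suc n)" "real (Suc (Suc n))"]
    by (simp add: g_def)
  have "(SUP n. ennreal (g n y)) = ennreal (y - 1 - ln y)" if "0 < y" for y
  proof (rule SUP_Lim)
    show "incseq (\<lambda>n. ennreal (g n y))"
      by (intro incseq_SucI ennreal_leI g_mono that)
    have "(\<lambda>n. g n y) \<longlonglongrightarrow> - ln y - (1 - y)"
      unfolding g_def by (intro tendsto_diff tendsto_mult_1_minus_powr_inverse that tendsto_const)
    then show "(\<lambda>n. ennreal (g n y)) \<longlonglongrightarrow> ennreal (y - 1 - ln y)"
      by (intro tendsto_ennrealI) (simp add: algebra_simps)
  qed
  then have "divergence = (\<integral>\<^sup>+x. (SUP n. ennreal (g n (Y x))) \<partial>M)"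
    unfolding divergence_def
    by (intro nn_integral_cong_AE) (use AE_Y_pos in \<open>auto elim!: eventually_mono\<close>)
  also have "\<dots> = (SUP n. \<integral>\<^sup>+x. ennreal (g n (Y x)) \<partial>M)"
  proof (rule nn_integral_monotone_convergence_SUP_AE)
    show "AE x in M. ennreal (g n (Y x)) \<le> ennreal (g (Suc n) (Y x))" for n
      using AE_Y_pos by eventually_elim (intro ennreal_leI g_mono)
  qed (simp add: g_def)
  finally show ?thesis by (simp add: g_def divergence_approx_def)
qed

lemma exists_scaled_log_moment_gt:
  assumes "a < enn2ereal divergence"
  shows "\<exists>p\<ge>1. a < ereal (scaled_log_moment p)"
proof (cases "a < 0")
  case True
  moreover have "0 \<le> ereal (scaled_log_moment 1)" using scaled_log_moment_nonneg[of 1] by simp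
  ultimately have "a < ereal (scaled_log_moment 1)" by (rule order.strict_trans2)
  then show ?thesis by (intro exI[of _ 1]) simp
next
  case False
  with assms obtain a' where a': "a = ereal a'" "0 \<le> a'" by (cases a) auto
  then have "ennreal a' < divergence"
    using assms by (metis enn2ereal_ennreal less_ennreal.rep_eq)
  then obtain n where "ennreal a' < (\<integral>\<^sup>+x. ennreal (divergence_approx (Suc n) x) \<partial>M)"
    unfolding divergence_eq_SUP by (auto simp: less_SUP_iff)
  also have "\<dots> \<le> ennreal (scaled_log_moment (Suc n))"
    by (rule nn_integral_divergence_approx_le) simp
  finally show ?thesis
    using a' by (intro exI[of _ "real (Suc n)"]) (simp add: ennreal_less_iff)
qed

lemma tendsto_scaled_log_moment:
  "((\<lambda>p. ereal (scaled_log_moment p)) \<longlongrightarrow> enn2ereal divergence) at_top"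
proof (rule mono_on_tendsto_at_top)
  show "mono_on {1..} (\<lambda>p. ereal (scaled_log_moment p))"
    using scaled_log_moment_mono by (simp add: mono_on_def)
qed (use scaled_log_moment_le_divergence exists_scaled_log_moment_gt in auto)

end

section \<open>Radon-Nikodym derivatives of a non-singular action\<close>

locale nonsingular_prob_action = prob_space M for M :: "'x measure" +
  fixes act :: "'g::group_add \<Rightarrow> 'x \<Rightarrow> 'x"
  assumes nonsingular: "nonsingular_action M act"
begin

lemma measurable_act[measurable]: "act s \<in> measurable M M"
  using nonsingular by (simp add: nonsingular_action_def group_action_def)

lemma act_uminus_act: "x \<in> space M \<Longrightarrow> act (- s) (act s x) = x"
  using nonsingular unfolding nonsingular_action_def group_action_def
  by (metis add.left_inverse)

lemma sets_push[simp]: "sets (push M act s) = sets M"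
  by (simp add: push_def)

lemma absolutely_continuous_push: "absolutely_continuous M (push M act s)"
  using nonsingular by (simp add: nonsingular_action_def)

lemma push_absolutely_continuous: "absolutely_continuous (push M act s) M"
  using nonsingular by (simp add: nonsingular_action_def)

lemma prob_space_push: "prob_space (push M act s)"
  unfolding push_def by (rule prob_space_distr) simp

definition push_density :: "'g \<Rightarrow> 'x \<Rightarrow> real" where
  "push_density s x = enn2real (RN_deriv M (push M act s) x)"

lemma push_density_nonneg[simp]: "0 \<le> push_density s x"
  by (simp add: push_density_def)

lemma measurable_push_density[measurable]: "push_density s \<in> borel_measurable M"
  unfolding push_density_def by measurable

lemma density_RN_deriv_push: "density M (RN_deriv M (push M act s)) = push M act s"
  by (rule density_RN_deriv[OF absolutely_continuous_push sets_push])

lemma AE_RN_deriv_push_eq: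
  "AE x in M. RN_deriv M (push M act s) x = ennreal (push_density s x) \<and> 0 < push_density s x"
proof -
  have "AE x in M. RN_deriv M (push M act s) x \<noteq> \<top>"
    using RN_deriv_finite[OF prob_space_imp_sigma_finite[OF prob_space_push]]
      nonsingular by (simp add: nonsingular_action_def)
  moreover have "AE x in M. RN_deriv M (push M act s) x \<noteq> 0"
  proof -
    define Z where "Z = {x \<in> space M. RN_deriv M (push M act s) x = 0}"
    have Z: "Z \<in> sets M" unfolding Z_def by measurable
    have "emeasure (push M act s) Z = (\<integral>\<^sup>+x. RN_deriv M (push M act s) x * indicator Z x \<partial>M)"
      using Z by (subst density_RN_deriv_push[symmetric]) (simp add: emeasure_density)
    also have "\<dots> = 0" by (rule nn_integral_zero') (auto simp: Z_def indicator_def)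
    finally have "Z \<in> null_sets (push M act s)" using Z by (simp add: null_sets_def)
    then have "Z \<in> null_sets M"
      using push_absolutely_continuous by (auto simp: absolutely_continuous_def)
    from AE_not_in[OF this] AE_space show ?thesis by eventually_elim (auto simp: Z_def)
  qed
  ultimately show ?thesis
    by eventually_elim
       (auto simp: push_density_def enn2real_positive_iff less_top ennreal_enn2real_if zero_less_iff_neq_zero)
qed

lemma density_push_density: "density M (\<lambda>x. ennreal (push_density s x)) = push M act s"
  using AE_RN_deriv_push_eq[of s]
  by (subst density_RN_deriv_push[symmetric]) (auto intro!: density_cong elim!: eventually_mono)

lemma density_inverse_push_density:
  "density M (\<lambda>x. ennreal (1 / push_density s (act s x))) = push M act (- s)"
proof (rule measure_eqI)
  fix A assume "A \<in> sets (density M (\<lambda>x. ennreal (1 / push_density s (act s x))))"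
  then have A[measurable]: "A \<in> sets M" by simp
  define H where "H y = ennreal (1 / push_density s y) * indicator A (act (- s) y)" for y
  have [measurable]: "H \<in> borel_measurable M" unfolding H_def by measurable
  have "emeasure (density M (\<lambda>x. ennreal (1 / push_density s (act s x)))) A
      = (\<integral>\<^sup>+x. H (act s x) \<partial>M)"
    by (subst emeasure_density) (auto intro!: nn_integral_cong simp: H_def act_uminus_act)
  also have "\<dots> = (\<integral>\<^sup>+y. H y \<partial>push M act s)"
    unfolding push_def by (rule nn_integral_distr[symmetric]) auto
  also have "\<dots> = (\<integral>\<^sup>+y. ennreal (push_density s y) * H y \<partial>M)"
    by (subst density_push_density[symmetric]) (simp add: nn_integral_density)
  also have "\<dots> = (\<integral>\<^sup>+y. indicator (act (- s) -` A \<inter> space M) y \<partial>M)"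
  proof (rule nn_integral_cong_AE)
    show "AE y in M. ennreal (push_density s y) * H y = indicator (act (- s) -` A \<inter> space M) y"
      using AE_RN_deriv_push_eq[of s] AE_space
    proof eventually_elim
      case (elim y)
      then have "ennreal (push_density s y) * ennreal (1 / push_density s y) = 1"
        by (simp flip: ennreal_mult)
      then show ?case using elim(2) by (simp add: H_def indicator_def mult.assoc[symmetric])
    qed
  qed
  also have "\<dots> = emeasure (push M act (- s)) A"
    by (simp add: push_def emeasure_distr)
  finally show "emeasure (density M (\<lambda>x. ennreal (1 / push_density s (act s x)))) A
      = emeasure (push M act (- s)) A" .
qed simp

lemma AE_rho_eq: "AE x in M. rho M act s x = 1 / push_density s (act s x)"
proof -
  have "AE x in M. ennreal (1 / push_density s (act s x)) = RN_deriv M (push M act (- s)) x"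
    by (rule RN_deriv_unique[OF _ density_inverse_push_density]) simp
  then show ?thesis
  proof eventually_elim
    case (elim x)
    show ?case unfolding rho_def elim[symmetric] by simp
  qed
qed

lemma rho_eq_push_density: "rho M act s = push_density (- s)"
  by (simp add: fun_eq_iff rho_def push_density_def)

lemma measurable_rho[measurable]: "rho M act s \<in> borel_measurable M"
  by (simp add: rho_eq_push_density)

lemma AE_rho_pos: "AE x in M. 0 < rho M act s x"
  using AE_RN_deriv_push_eq[of "- s"] by eventually_elim (simp add: rho_eq_push_density)

lemma nn_integral_rho_comp:
  assumes [measurable]: "g \<in> borel_measurable borel"
  shows "(\<integral>\<^sup>+x. g (rho M act s x) \<partial>M)
    = (\<integral>\<^sup>+x. ennreal (push_density s x) * g (1 / push_density s x) \<partial>M)"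
proof -
  have "(\<integral>\<^sup>+x. g (rho M act s x) \<partial>M) = (\<integral>\<^sup>+x. g (1 / push_density s (act s x)) \<partial>M)"
    by (rule nn_integral_cong_AE) (use AE_rho_eq[of s] in \<open>auto elim!: eventually_mono\<close>)
  also have "\<dots> = (\<integral>\<^sup>+y. g (1 / push_density s y) \<partial>push M act s)"
    unfolding push_def by (rule nn_integral_distr[symmetric]) auto
  also have "\<dots> = (\<integral>\<^sup>+y. ennreal (push_density s y) * g (1 / push_density s y) \<partial>M)"
    by (subst density_push_density[symmetric]) (simp add: nn_integral_density)
  finally show ?thesis .
qed

lemma nn_integral_rho: "(\<integral>\<^sup>+x. ennreal (rho M act s x) \<partial>M) = 1"
proof -
  have "(\<integral>\<^sup>+x. ennreal (rho M act s x) \<partial>M)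
      = (\<integral>\<^sup>+x. ennreal (push_density s x) * ennreal (1 / push_density s x) \<partial>M)"
    by (rule nn_integral_rho_comp) simp
  also have "\<dots> = (\<integral>\<^sup>+x. 1 \<partial>M)"
    using AE_RN_deriv_push_eq[of s]
    by (intro nn_integral_cong_AE, eventually_elim) (simp flip: ennreal_mult)
  finally show ?thesis by (simp add: emeasure_space_1)
qed

end

lemma measurable_pair_measure_pmf1:
  fixes f :: "'g::countable \<times> 'x \<Rightarrow> 'b"
  assumes "\<And>s. (\<lambda>x. f (s, x)) \<in> measurable M K"
  shows "f \<in> measurable (measure_pmf \<mu> \<Otimes>\<^sub>M M) K"
proof -
  have "f \<in> measurable (count_space UNIV \<Otimes>\<^sub>M M) K"
    by (rule measurable_pair_measure_countable1) (auto simp: assms)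
  moreover have "sets (measure_pmf \<mu> \<Otimes>\<^sub>M M) = sets (count_space UNIV \<Otimes>\<^sub>M M)"
    by (intro sets_pair_measure_cong) simp_all
  ultimately show ?thesis by (simp cong: measurable_cong_sets)
qed

lemma measurable_pair_measure_pmf2:
  fixes f :: "'x \<times> 'g::countable \<Rightarrow> 'b"
  assumes "\<And>s. (\<lambda>x. f (x, s)) \<in> measurable M K"
  shows "f \<in> measurable (M \<Otimes>\<^sub>M measure_pmf \<mu>) K"
proof -
  have "(\<lambda>(s, x). f (x, s)) \<in> measurable (measure_pmf \<mu> \<Otimes>\<^sub>M M) K"
    by (rule measurable_pair_measure_pmf1) (simp add: assms)
  then show ?thesis by (simp add: measurable_pair_swap_iff[of f])
qed

locale nonsingular_prob_action_pmf = nonsingular_prob_action M act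
  for M :: "'x measure" and act :: "'g::{group_add,countable} \<Rightarrow> 'x \<Rightarrow> 'x" +
  fixes \<mu> :: "'g pmf"
begin

sublocale P: pair_prob_space "measure_pmf \<mu>" M
  by (intro pair_prob_space.intro pair_sigma_finite.intro prob_space_imp_sigma_finite
        prob_space_measure_pmf prob_space_axioms)

lemma nn_integral_rho_pair:
  assumes [measurable]: "g \<in> borel_measurable borel"
  shows "(\<integral>\<^sup>+\<omega>. g (case_prod (rho M act) \<omega>) \<partial>(measure_pmf \<mu> \<Otimes>\<^sub>M M))
    = (\<integral>\<^sup>+s. (\<integral>\<^sup>+x. g (rho M act s x) \<partial>M) \<partial>measure_pmf \<mu>)"
proof -
  have "(\<lambda>\<omega>. g (case_prod (rho M act) \<omega>)) \<in> borel_measurable (measure_pmf \<mu> \<Otimes>\<^sub>M M)"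
    by measurable
  from nn_integral_fst[OF this] show ?thesis by simp
qed

lemma unit_mean_density_rho: "unit_mean_density (measure_pmf \<mu> \<Otimes>\<^sub>M M) (\<lambda>(s, x). rho M act s x)"
proof -
  have nonneg: "0 \<le> rho M act s x" for s x by (simp add: rho_def)
  have nn_integral: "(\<integral>\<^sup>+\<omega>. ennreal (case_prod (rho M act) \<omega>) \<partial>(measure_pmf \<mu> \<Otimes>\<^sub>M M)) = 1"
    by (simp add: nn_integral_rho_pair nn_integral_rho)
  have integrable: "integrable (measure_pmf \<mu> \<Otimes>\<^sub>M M) (\<lambda>(s, x). rho M act s x)"
    by (rule integrableI_nn_integral_finite[where x=1]) (use nn_integral nonneg in auto)
  then have "integral\<^sup>L (measure_pmf \<mu> \<Otimes>\<^sub>M M) (\<lambda>(s, x). rho M act s x) = 1"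
    using nn_integral_eq_integral[OF integrable] nn_integral nonneg
    by (simp add: case_prod_beta integral_nonneg)
  moreover have "AE \<omega> in measure_pmf \<mu> \<Otimes>\<^sub>M M. 0 < case_prod (rho M act) \<omega>"
    by (rule P.AE_pair_measure) (auto intro: AE_rho_pos)
  ultimately show ?thesis
    using integrable by unfold_locales auto
qed

sublocale R: unit_mean_density "measure_pmf \<mu> \<Otimes>\<^sub>M M" "\<lambda>(s, x). rho M act s x"
  by (rule unit_mean_density_rho)

lemma furstenberg_entropy_eq_divergence: "furstenberg_entropy \<mu> M act = enn2ereal R.divergence"
proof -
  have "(\<integral>\<^sup>+s. (\<integral>\<^sup>+x. ennreal (- ln (rho M act s x)) \<partial>M) \<partial>measure_pmf \<mu>)
      = (\<integral>\<^sup>+\<omega>. ennreal (- ln (case_prod (rho M act) \<omega>)) \<partial>(measure_pmf \<mu> \<Otimes>\<^sub>M M))"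
    "(\<integral>\<^sup>+s. (\<integral>\<^sup>+x. ennreal (ln (rho M act s x)) \<partial>M) \<partial>measure_pmf \<mu>)
      = (\<integral>\<^sup>+\<omega>. ennreal (ln (case_prod (rho M act) \<omega>)) \<partial>(measure_pmf \<mu> \<Otimes>\<^sub>M M))"
    by (rule nn_integral_rho_pair[symmetric], measurable)+
  then show ?thesis
    unfolding furstenberg_entropy_def by (simp only: R.ln_parts_nn_integral_eq_divergence)
qed

lemma nn_integral_push_density_powr:
  assumes t: "0 < t" "t \<le> 1"
  shows "(\<integral>\<^sup>+x. (\<integral>\<^sup>+s. ennreal (push_density s x powr (1 - t)) \<partial>measure_pmf \<mu>) \<partial>M)
    = ennreal (R.power_moment t)"
proof -
  have "(\<integral>\<^sup>+x. (\<integral>\<^sup>+s. ennreal (push_density s x powr (1 - t)) \<partial>measure_pmf \<mu>) \<partial>M)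
      = (\<integral>\<^sup>+s. (\<integral>\<^sup>+x. ennreal (push_density s x powr (1 - t)) \<partial>M) \<partial>measure_pmf \<mu>)"
    by (rule P.Fubini') (rule measurable_pair_measure_pmf1, simp)
  also have "\<dots> = (\<integral>\<^sup>+s. (\<integral>\<^sup>+x. ennreal (rho M act s x powr t) \<partial>M) \<partial>measure_pmf \<mu>)"
  proof -
    have "(\<integral>\<^sup>+x. ennreal (rho M act s x powr t) \<partial>M)
        = (\<integral>\<^sup>+x. ennreal (push_density s x) * ennreal ((1 / push_density s x) powr t) \<partial>M)" for s
      by (rule nn_integral_rho_comp) simp
    then show ?thesis by (simp add: powr_1_minus_eq_mult_inverse_powr ennreal_mult)
  qed
  also have "\<dots> = (\<integral>\<^sup>+\<omega>. ennreal (case_prod (rho M act) \<omega> powr t) \<partial>(measure_pmf \<mu> \<Otimes>\<^sub>M M))"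
    by (rule nn_integral_rho_pair[symmetric]) measurable
  also have "\<dots> = ennreal (R.power_moment t)"
    unfolding R.power_moment_def by (rule nn_integral_eq_integral[OF R.integrable_Y_powr[OF t]]) simp
  finally show ?thesis .
qed

lemma pairing_koopman_mu_eq_power_moment:
  assumes p: "1 < p"
  shows "pairing M (koopman_mu \<mu> M act (p / (p - 1)) (\<lambda>_. 1)) (\<lambda>_. 1) = R.power_moment (1 / p)"
proof -
  define t where "t = 1 / p"
  have t: "0 < t" "t \<le> 1" using p by (auto simp: t_def)
  have exponent: "1 / (p / (p - 1)) = 1 - t" using p by (simp add: t_def field_simps)
  define I where "I x = (\<integral>\<^sup>+s. ennreal (push_density s x powr (1 - t)) \<partial>measure_pmf \<mu>)" for x
  have "(\<lambda>(x, s). ennreal (push_density s x powr (1 - t))) \<in> borel_measurable (M \<Otimes>\<^sub>M measure_pmf \<mu>)"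
    by (rule measurable_pair_measure_pmf2) simp
  then have [measurable]: "I \<in> borel_measurable M"
    unfolding I_def by measurable
  have I: "(\<integral>\<^sup>+x. I x \<partial>M) = ennreal (R.power_moment t)"
    unfolding I_def by (rule nn_integral_push_density_powr[OF t])
  then have "AE x in M. I x \<noteq> \<top>" using nn_integral_PInf_AE[of I M] by simp
  then have "(\<integral>\<^sup>+x. ennreal (enn2real (I x)) \<partial>M) = ennreal (R.power_moment t)"
    unfolding I[symmetric] by (intro nn_integral_cong_AE, eventually_elim) (simp add: ennreal_enn2real_if)
  moreover have "pairing M (koopman_mu \<mu> M act (p / (p - 1)) (\<lambda>_. 1)) (\<lambda>_. 1)
      = enn2real (\<integral>\<^sup>+x. ennreal (enn2real (I x)) \<partial>M)"
    unfolding pairing_def koopman_mu_def koopman_def exponent I_def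
    by (simp add: integral_eq_nn_integral push_density_def)
  ultimately show ?thesis
    using R.power_moment_pos[OF t] by (simp add: t_def)
qed

end

theorem proposition6p1:
  fixes \<mu> :: "'g::{group_add,countable} pmf"
    and M :: "'x::polish_space measure"
    and act :: "'g \<Rightarrow> 'x \<Rightarrow> 'x"
  assumes "stationary_space \<mu> M act"
  defines "F \<equiv> (\<lambda>p::real. - p * ln (pairing M (koopman_mu \<mu> M act (p / (p - 1)) (\<lambda>_. 1)) (\<lambda>_. 1)))"
  shows "mono_on {2..} F
         \<and> (\<forall>p\<ge>2. 0 \<le> F p \<and> ereal (F p) \<le> furstenberg_entropy \<mu> M act)
         \<and> (nondegenerate \<mu> \<longrightarrow> ((\<lambda>p. ereal (F p)) \<longlongrightarrow> furstenberg_entropy \<mu> M act) at_top)"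
proof -
  interpret nonsingular_prob_action_pmf M act \<mu>
    using assms(1) unfolding stationary_space_def standard_prob_space_def
    by (simp add: nonsingular_prob_action_pmf_def nonsingular_prob_action_def
        nonsingular_prob_action_axioms_def)
  have F_eq: "F p = R.scaled_log_moment p" if "2 \<le> p" for p
    using pairing_koopman_mu_eq_power_moment[of p] that by (simp add: F_def R.scaled_log_moment_def)
  have "mono_on {2..} F"
    using R.scaled_log_moment_mono by (auto simp: mono_on_def F_eq)
  moreover have "0 \<le> F p \<and> ereal (F p) \<le> furstenberg_entropy \<mu> M act" if "2 \<le> p" for p
    using R.scaled_log_moment_nonneg R.scaled_log_moment_le_divergence that
    by (simp add: F_eq furstenberg_entropy_eq_divergence)
  moreover have "((\<lambda>p. ereal (F p)) \<longlongrightarrow> furstenberg_entropy \<mu> M act) at_top"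
  proof -
    have "\<forall>\<^sub>F p in at_top. ereal (R.scaled_log_moment p) = ereal (F p)"
      using eventually_ge_at_top[of 2] by eventually_elim (simp add: F_eq)
    from tendsto_cong[OF this] show ?thesis
      using R.tendsto_scaled_log_moment by (simp add: furstenberg_entropy_eq_divergence)
  qed
  ultimately show ?thesis by blast
qed

end
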